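(* Let $\nu$ be a Lévy measure on $\mathbb{R}$ such that $\int_{|y|>1}|y|\,\nu(dy)<\infty$ and $\nu$ has a density $\rho$ with $\rho(y)\le M/|y|^{1+\alpha}$ for $|y|\le1$, for some $M>0$ and $0\le\alpha<1$. Let $D=(\ell,r)$ be a bounded open interval, $s>0$, $D_s=D\times(0,s)$, and let $\phi$ be a function on $\mathbb{R}\times[0,s]$ that is Lipschitz continuous in its first variable and $1/2$-Hölder continuous in its second variable. Define $$I^f\phi(x,t)=\int_{\mathbb{R}}[\phi(x+y,t)-\phi(x,t)]\,\nu(dy).$$ Then $I^f\phi\in H^{1-\gamma,\frac{1-\gamma}{2}}(\overline{D_s})$ for every $\gamma\in(0,1)$ when $\alpha=0$, and $I^f\phi\in H^{1-\alpha,\frac{1-\alpha}{2}}(\overline{D_s})$ when $0<\alpha<1$.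
   Context: For $\beta\in(0,1)$ and a closed set $Q\subset\mathbb{R}\times[0,\infty)$, $H^{\beta,\beta/2}(Q)$ is the space of continuous functions $v$ on $Q$ with finite norm $\sup_Q|v|+\sup_{|x-x'|\le\rho_0}\frac{|v(x,t)-v(x',t)|}{|x-x'|^{\beta}}+\sup_{|t-t'|\le\rho_0}\frac{|v(x,t)-v(x,t')|}{|t-t'|^{\beta/2}}$ (points in $Q$), for a fixed constant $\rho_0>0$. *)

theory Defs
  imports "HOL-Analysis.Analysis"
begin

definition levy_measure :: "real measure \<Rightarrow> bool" where
  "levy_measure \<nu> \<longleftrightarrow> sets \<nu> = sets borel \<and> emeasure \<nu> {0} = 0 \<and>
     (\<integral>\<^sup>+ y. ennreal (min 1 (y\<^sup>2)) \<partial>\<nu>) < \<infinity>"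

definition hoelder_space :: "real \<Rightarrow> real \<Rightarrow> (real \<times> real) set \<Rightarrow> (real \<times> real \<Rightarrow> real) \<Rightarrow> bool" where
  "hoelder_space \<rho>0 \<beta> Q v \<longleftrightarrow>
     continuous_on Q v \<and>
     (\<exists>B. \<forall>p\<in>Q. \<bar>v p\<bar> \<le> B) \<and>
     (\<exists>C. \<forall>x x' t. (x, t) \<in> Q \<longrightarrow> (x', t) \<in> Q \<longrightarrow> \<bar>x - x'\<bar> \<le> \<rho>0 \<longrightarrow>
          \<bar>v (x, t) - v (x', t)\<bar> \<le> C * \<bar>x - x'\<bar> powr \<beta>) \<and>
     (\<exists>C. \<forall>x t t'. (x, t) \<in> Q \<longrightarrow> (x, t') \<in> Q \<longrightarrow> \<bar>t - t'\<bar> \<le> \<rho>0 \<longrightarrow>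
          \<bar>v (x, t) - v (x, t')\<bar> \<le> C * \<bar>t - t'\<bar> powr (\<beta> / 2))"

definition nonlocal_op :: "real measure \<Rightarrow> (real \<Rightarrow> real \<Rightarrow> real) \<Rightarrow> real \<times> real \<Rightarrow> real" where
  "nonlocal_op \<nu> \<phi> p = (\<integral> y. (\<phi> (fst p + y) (snd p) - \<phi> (fst p) (snd p)) \<partial>\<nu>)"

end

theory Submission
  imports Defs
begin

text \<open>Put \<open>\<eta> = |a - b| + |t - t'| powr (1/2)\<close>. At a jump y the integrands of the nonlocal
  operator at (a, t) and at (b, t') differ by at most \<open>2 L min |y| \<eta>\<close>: by \<open>2 L |y|\<close> from
  the Lipschitz bound in space, and by \<open>2 L \<eta>\<close> from the regularity of \<phi>. The increment is
  therefore controlled by the truncated moment \<open>\<integral> min |y| \<eta> d\<nu>\<close>, which is \<open>O(\<eta> powr \<beta>)\<close>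
  whenever \<open>0 < \<beta> < 1\<close> and \<open>\<beta> \<le> 1 - \<alpha>\<close>: on \<open>|y| \<le> 1\<close> the density is dominated by
  \<open>M |y| powr (\<beta> - 2)\<close>, whose truncated moment is a multiple of \<open>\<eta> powr \<beta>\<close>, and the jumps
  beyond 1 contribute at most \<open>\<eta> \<integral>\<^bsub>|y| > 1\<^esub> |y| d\<nu>\<close>. Such an estimate on the compact closed
  cylinder gives continuity, boundedness and both Hoelder seminorms, and \<open>1 - \<gamma>\<close> and
  \<open>1 - \<alpha>\<close> are admissible exponents \<beta>.\<close>

lemma nn_integral_abs_powr_min_le:
  fixes \<beta> \<eta> :: real
  assumes \<beta>: "0 < \<beta>" "\<beta> < 1" and \<eta>: "0 < \<eta>"
  shows "(\<integral>\<^sup>+ y. ennreal (\<bar>y\<bar> powr (\<beta> - 2) * min \<bar>y\<bar> \<eta>) \<partial>lborel)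
           \<le> ennreal (2 * (1/\<beta> + 1/(1-\<beta>)) * \<eta> powr \<beta>)"
proof -
  define g where
    "g u = indicator {0..\<eta>} u * u powr (\<beta> - 1) + indicator {\<eta>..} u * (\<eta> * u powr (\<beta> - 2))"
    for u :: real
  have g_nonneg: "0 \<le> g u" for u
    using \<eta> by (auto simp: g_def indicator_def)
  have g_meas [measurable]: "(\<lambda>u. ennreal (g u)) \<in> borel_measurable borel"
    unfolding g_def by measurable
  have near_int: "((\<lambda>u. u powr (\<beta> - 1)) has_integral \<eta> powr \<beta> / \<beta>) {0..\<eta>}"
    using has_integral_powr_from_0[of "\<beta> - 1" \<eta>] \<beta> \<eta> by simp
  have near: "(\<integral>\<^sup>+ u. ennreal (u powr (\<beta> - 1)) * indicator {0..\<eta>} u \<partial>lborel)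
                     = ennreal (\<eta> powr \<beta> / \<beta>)"
    by (rule nn_integral_has_integral_lebesgue'[OF _ near_int]) simp
  have "((\<lambda>u. u powr (\<beta> - 2)) has_integral \<eta> powr (\<beta> - 1) / (1 - \<beta>)) {\<eta>..}"
    using has_integral_powr_to_inf[of "\<beta> - 2" \<eta>] \<beta> \<eta> by (simp add: minus_divide_right)
  moreover have "\<eta> * (\<eta> powr (\<beta> - 1) / (1 - \<beta>)) = \<eta> powr \<beta> / (1 - \<beta>)"
    using \<eta> by (simp add: powr_diff)
  ultimately have far_int: "((\<lambda>u. \<eta> * u powr (\<beta> - 2)) has_integral \<eta> powr \<beta> / (1 - \<beta>)) {\<eta>..}"
    using has_integral_mult_right by metis
  have far: "(\<integral>\<^sup>+ u. ennreal (\<eta> * u powr (\<beta> - 2)) * indicator {\<eta>..} u \<partial>lborel)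
                    = ennreal (\<eta> powr \<beta> / (1 - \<beta>))"
    by (rule nn_integral_has_integral_lebesgue'[OF _ far_int]) (use \<eta> in simp)
  have "(\<integral>\<^sup>+ u. ennreal (g u) \<partial>lborel)
      = (\<integral>\<^sup>+ u. ennreal (u powr (\<beta> - 1)) * indicator {0..\<eta>} u
                 + ennreal (\<eta> * u powr (\<beta> - 2)) * indicator {\<eta>..} u \<partial>lborel)"
    using \<eta> by (intro nn_integral_cong) (auto simp: g_def indicator_def ennreal_plus)
  also have "\<dots> = ennreal (\<eta> powr \<beta> / \<beta>) + ennreal (\<eta> powr \<beta> / (1 - \<beta>))"
    unfolding near[symmetric] far[symmetric] by (rule nn_integral_add) auto
  also have "\<dots> = ennreal ((1/\<beta> + 1/(1-\<beta>)) * \<eta> powr \<beta>)"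
    using \<beta> by (simp add: ennreal_plus[symmetric] algebra_simps del: ennreal_plus)
  finally have half_line: "(\<integral>\<^sup>+ u. ennreal (g u) \<partial>lborel) = ennreal ((1/\<beta> + 1/(1-\<beta>)) * \<eta> powr \<beta>)" .
  have reflect: "(\<integral>\<^sup>+ u. ennreal (g (- u)) \<partial>lborel) = (\<integral>\<^sup>+ u. ennreal (g u) \<partial>lborel)"
    using nn_integral_real_affine[OF g_meas, of "-1" 0] by simp
  have split: "ennreal (\<bar>y\<bar> powr (\<beta> - 2) * min \<bar>y\<bar> \<eta>) \<le> ennreal (g y) + ennreal (g (- y))" for y
  proof -
    have "\<bar>y\<bar> powr (\<beta> - 2) * min \<bar>y\<bar> \<eta> \<le> g \<bar>y\<bar>"
    proof (cases "\<bar>y\<bar> \<le> \<eta>")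
      case True
      then have "\<bar>y\<bar> powr (\<beta> - 2) * min \<bar>y\<bar> \<eta> = \<bar>y\<bar> powr (\<beta> - 1)"
        using powr_add[of "\<bar>y\<bar>" "\<beta> - 2" 1] by (cases "y = 0") simp_all
      then show ?thesis
        using True \<eta> by (auto simp: g_def indicator_def)
    qed (auto simp: g_def indicator_def mult.commute)
    also have "g \<bar>y\<bar> \<le> g y + g (- y)"
      using g_nonneg by (cases "0 \<le> y") auto
    finally show ?thesis
      using g_nonneg by (simp add: ennreal_plus[symmetric] del: ennreal_plus)
  qed
  have "(\<integral>\<^sup>+ y. ennreal (\<bar>y\<bar> powr (\<beta> - 2) * min \<bar>y\<bar> \<eta>) \<partial>lborel)
      \<le> (\<integral>\<^sup>+ y. ennreal (g y) + ennreal (g (- y)) \<partial>lborel)"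
    by (intro nn_integral_mono split)
  also have "\<dots> = 2 * ennreal ((1/\<beta> + 1/(1-\<beta>)) * \<eta> powr \<beta>)"
    by (subst nn_integral_add) (auto simp: reflect half_line mult_2)
  also have "\<dots> = ennreal (2 * ((1/\<beta> + 1/(1-\<beta>)) * \<eta> powr \<beta>))"
    using \<beta> by (subst ennreal_mult) auto
  finally show ?thesis
    by (simp only: mult.assoc)
qed

lemma density_min_abs_le:
  fixes \<rho> :: "real \<Rightarrow> real" and M \<alpha> \<beta> \<eta> y :: real
  assumes \<rho>_nonneg: "\<And>y. 0 \<le> \<rho> y" and M: "0 \<le> M" and \<beta>: "\<beta> \<le> 1 - \<alpha>"
    and \<rho>_bound: "\<And>y. y \<noteq> 0 \<Longrightarrow> \<bar>y\<bar> \<le> 1 \<Longrightarrow> \<rho> y \<le> M / \<bar>y\<bar> powr (1 + \<alpha>)"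
    and \<eta>: "0 < \<eta>" "\<eta> \<le> 1"
  shows "\<rho> y * min \<bar>y\<bar> \<eta>
           \<le> M * (\<bar>y\<bar> powr (\<beta> - 2) * min \<bar>y\<bar> \<eta>) + \<eta> * (indicator {y. 1 < \<bar>y\<bar>} y * \<bar>y\<bar> * \<rho> y)"
proof -
  have singular_nonneg: "0 \<le> M * (\<bar>y\<bar> powr (\<beta> - 2) * min \<bar>y\<bar> \<eta>)"
    using M \<eta> by simp
  have tail_nonneg: "0 \<le> \<eta> * (indicator {y. 1 < \<bar>y\<bar>} y * \<bar>y\<bar> * \<rho> y)"
    using \<eta> \<rho>_nonneg[of y] by (simp add: indicator_def)
  consider "y = 0" | "y \<noteq> 0" "\<bar>y\<bar> \<le> 1" | "1 < \<bar>y\<bar>" by linarith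
  then show ?thesis
  proof cases
    case 1
    then show ?thesis using singular_nonneg tail_nonneg \<eta> by simp
  next
    case 2
    have "\<bar>y\<bar> powr (2 - \<beta>) \<le> \<bar>y\<bar> powr (1 + \<alpha>)"
      using 2 \<beta> by (intro powr_mono') auto
    then have "M / \<bar>y\<bar> powr (1 + \<alpha>) \<le> M / \<bar>y\<bar> powr (2 - \<beta>)"
      using 2 M by (intro divide_left_mono) auto
    also have "\<dots> = M * \<bar>y\<bar> powr (\<beta> - 2)"
      using powr_minus[of "\<bar>y\<bar>" "2 - \<beta>"] by (simp add: divide_inverse)
    finally have "\<rho> y * min \<bar>y\<bar> \<eta> \<le> M * \<bar>y\<bar> powr (\<beta> - 2) * min \<bar>y\<bar> \<eta>"
      using \<rho>_bound[OF 2] \<eta> by (intro mult_right_mono) auto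
    then show ?thesis
      using tail_nonneg by (simp add: mult.assoc)
  next
    case 3
    then have "\<rho> y * min \<bar>y\<bar> \<eta> \<le> \<eta> * (\<bar>y\<bar> * \<rho> y)"
      using \<eta> \<rho>_nonneg[of y] mult_left_mono[of 1 "\<bar>y\<bar>" "\<eta> * \<rho> y"]
      by (simp add: algebra_simps)
    then show ?thesis
      using 3 singular_nonneg by simp
  qed
qed

lemma nn_integral_min_abs_density_le:
  fixes \<rho> :: "real \<Rightarrow> real" and \<nu> :: "real measure" and M \<alpha> \<beta> \<eta> :: real
  assumes \<nu>: "\<nu> = density lborel (\<lambda>y. ennreal (\<rho> y))"
    and \<rho>_meas: "\<rho> \<in> borel_measurable borel" and \<rho>_nonneg: "\<And>y. 0 \<le> \<rho> y"
    and M: "0 \<le> M" and \<beta>: "0 < \<beta>" "\<beta> < 1" "\<beta> \<le> 1 - \<alpha>"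
    and \<rho>_bound: "\<And>y. y \<noteq> 0 \<Longrightarrow> \<bar>y\<bar> \<le> 1 \<Longrightarrow> \<rho> y \<le> M / \<bar>y\<bar> powr (1 + \<alpha>)"
    and \<eta>: "0 < \<eta>" "\<eta> \<le> 1"
  shows "(\<integral>\<^sup>+ y. ennreal (min \<bar>y\<bar> \<eta>) \<partial>\<nu>)
           \<le> ennreal (2 * M * (1/\<beta> + 1/(1-\<beta>)) * \<eta> powr \<beta>)
              + ennreal \<eta> * (\<integral>\<^sup>+ y. indicator {y. 1 < \<bar>y\<bar>} y * ennreal \<bar>y\<bar> \<partial>\<nu>)"
proof -
  define tail where "tail y = indicator {y. 1 < \<bar>y\<bar>} y * ennreal \<bar>y\<bar>" for y :: real
  have "(\<integral>\<^sup>+ y. ennreal (min \<bar>y\<bar> \<eta>) \<partial>\<nu>) = (\<integral>\<^sup>+ y. ennreal (\<rho> y * min \<bar>y\<bar> \<eta>) \<partial>lborel)"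
    unfolding \<nu> using \<rho>_meas \<rho>_nonneg \<eta>
    by (subst nn_integral_density) (auto simp: ennreal_mult)
  also have "\<dots> \<le> (\<integral>\<^sup>+ y. ennreal M * ennreal (\<bar>y\<bar> powr (\<beta> - 2) * min \<bar>y\<bar> \<eta>)
                            + ennreal \<eta> * (ennreal (\<rho> y) * tail y) \<partial>lborel)"
  proof (intro nn_integral_mono)
    fix y
    have "ennreal (\<rho> y * min \<bar>y\<bar> \<eta>)
        \<le> ennreal (M * (\<bar>y\<bar> powr (\<beta> - 2) * min \<bar>y\<bar> \<eta>) + \<eta> * (indicator {y. 1 < \<bar>y\<bar>} y * \<bar>y\<bar> * \<rho> y))"
      by (intro ennreal_leI density_min_abs_le[OF \<rho>_nonneg M \<beta>(3) \<rho>_bound \<eta>])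
    also have "\<dots> = ennreal M * ennreal (\<bar>y\<bar> powr (\<beta> - 2) * min \<bar>y\<bar> \<eta>) + ennreal \<eta> * (ennreal (\<rho> y) * tail y)"
      using M \<eta> \<rho>_nonneg[of y]
      by (simp add: tail_def indicator_def ennreal_plus ennreal_mult[symmetric] mult.commute)
    finally show "ennreal (\<rho> y * min \<bar>y\<bar> \<eta>) \<le> \<dots>" .
  qed
  also have "\<dots> = ennreal M * (\<integral>\<^sup>+ y. ennreal (\<bar>y\<bar> powr (\<beta> - 2) * min \<bar>y\<bar> \<eta>) \<partial>lborel)
                   + ennreal \<eta> * (\<integral>\<^sup>+ y. tail y \<partial>\<nu>)"
    unfolding \<nu> tail_def using \<rho>_meas
    by (subst nn_integral_add) (auto simp: nn_integral_cmult nn_integral_density)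
  also have "\<dots> \<le> ennreal M * ennreal (2 * (1/\<beta> + 1/(1-\<beta>)) * \<eta> powr \<beta>)
                   + ennreal \<eta> * (\<integral>\<^sup>+ y. tail y \<partial>\<nu>)"
    using nn_integral_abs_powr_min_le[OF \<beta>(1,2) \<eta>(1)] by (intro add_mono mult_left_mono) auto
  also have "ennreal M * ennreal (2 * (1/\<beta> + 1/(1-\<beta>)) * \<eta> powr \<beta>)
             = ennreal (2 * M * (1/\<beta> + 1/(1-\<beta>)) * \<eta> powr \<beta>)"
    using M \<beta> by (subst ennreal_mult[symmetric]) (auto simp: mult_ac)
  finally show ?thesis
    unfolding tail_def .
qed

lemma integrable_abs_if_truncated_and_tail_finite:
  fixes \<nu> :: "real measure"
  assumes sets: "sets \<nu> = sets borel"
    and truncated: "(\<integral>\<^sup>+ y. ennreal (min \<bar>y\<bar> 1) \<partial>\<nu>) < \<infinity>"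
    and tail: "(\<integral>\<^sup>+ y. indicator {y. 1 < \<bar>y\<bar>} y * ennreal \<bar>y\<bar> \<partial>\<nu>) < \<infinity>"
  shows "integrable \<nu> abs"
proof (rule integrableI_nonneg)
  show "abs \<in> borel_measurable \<nu>"
    using borel_measurable_abs[OF measurable_ident_sets[OF sets]] by simp
  have "(\<integral>\<^sup>+ y. ennreal \<bar>y\<bar> \<partial>\<nu>)
      \<le> (\<integral>\<^sup>+ y. ennreal (min \<bar>y\<bar> 1) + indicator {y. 1 < \<bar>y\<bar>} y * ennreal \<bar>y\<bar> \<partial>\<nu>)"
    by (intro nn_integral_mono) (auto simp: indicator_def)
  also have "\<dots> = (\<integral>\<^sup>+ y. ennreal (min \<bar>y\<bar> 1) \<partial>\<nu>)
                   + (\<integral>\<^sup>+ y. indicator {y. 1 < \<bar>y\<bar>} y * ennreal \<bar>y\<bar> \<partial>\<nu>)"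
    by (subst nn_integral_add) (simp_all add: measurable_cong_sets[OF sets refl])
  also have "\<dots> < \<infinity>"
    using truncated tail by simp
  finally show "(\<integral>\<^sup>+ y. ennreal \<bar>y\<bar> \<partial>\<nu>) < \<infinity>" .
qed simp

lemma integral_min_abs_le_powr:
  fixes \<nu> :: "real measure" and C \<beta> \<eta> :: real
  assumes int: "integrable \<nu> abs" and \<beta>: "0 \<le> \<beta>" and C: "0 \<le> C"
    and small: "\<And>\<eta>. 0 < \<eta> \<Longrightarrow> \<eta> \<le> 1 \<Longrightarrow> (\<integral>\<^sup>+ y. ennreal (min \<bar>y\<bar> \<eta>) \<partial>\<nu>) \<le> ennreal (C * \<eta> powr \<beta>)"
    and \<eta>: "0 \<le> \<eta>"
  shows "(\<integral> y. min \<bar>y\<bar> \<eta> \<partial>\<nu>) \<le> max C (\<integral> y. \<bar>y\<bar> \<partial>\<nu>) * \<eta> powr \<beta>"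
proof -
  have int_min: "integrable \<nu> (\<lambda>y. min \<bar>y\<bar> \<eta>)"
    using int \<eta> by (intro Bochner_Integration.integrable_bound[OF int]) auto
  consider "\<eta> = 0" | "0 < \<eta>" "\<eta> \<le> 1" | "1 < \<eta>"
    using \<eta> by linarith
  then show ?thesis
  proof cases
    case 1
    then show ?thesis by simp
  next
    case 2
    have "ennreal (\<integral> y. min \<bar>y\<bar> \<eta> \<partial>\<nu>) = (\<integral>\<^sup>+ y. ennreal (min \<bar>y\<bar> \<eta>) \<partial>\<nu>)"
      using \<eta> int_min by (intro nn_integral_eq_integral[symmetric]) auto
    also have "\<dots> \<le> ennreal (C * \<eta> powr \<beta>)"
      using small[OF 2] .
    finally have "(\<integral> y. min \<bar>y\<bar> \<eta> \<partial>\<nu>) \<le> C * \<eta> powr \<beta>"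
      using C by (simp add: ennreal_le_iff)
    also have "\<dots> \<le> max C (\<integral> y. \<bar>y\<bar> \<partial>\<nu>) * \<eta> powr \<beta>"
      by (intro mult_right_mono) auto
    finally show ?thesis .
  next
    case 3
    have "(\<integral> y. min \<bar>y\<bar> \<eta> \<partial>\<nu>) \<le> (\<integral> y. \<bar>y\<bar> \<partial>\<nu>)"
      by (intro integral_mono int_min int) auto
    also have "\<dots> \<le> (\<integral> y. \<bar>y\<bar> \<partial>\<nu>) * \<eta> powr \<beta>"
      using 3 \<beta> ge_one_powr_ge_zero[of \<eta> \<beta>] mult_left_mono[of 1 "\<eta> powr \<beta>" "\<integral> y. \<bar>y\<bar> \<partial>\<nu>"]
      by simp
    also have "\<dots> \<le> max C (\<integral> y. \<bar>y\<bar> \<partial>\<nu>) * \<eta> powr \<beta>"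
      by (intro mult_right_mono) auto
    finally show ?thesis .
  qed
qed

lemma integrable_lipschitz_increment:
  fixes \<nu> :: "real measure" and g :: "real \<Rightarrow> real"
  assumes sets: "sets \<nu> = sets borel" and int: "integrable \<nu> abs"
    and lip: "\<And>x x'. \<bar>g x - g x'\<bar> \<le> L * \<bar>x - x'\<bar>"
  shows "integrable \<nu> (\<lambda>y. g (x + y) - g x)"
proof (rule Bochner_Integration.integrable_bound)
  show "integrable \<nu> (\<lambda>y. L * \<bar>y\<bar>)"
    using int by simp
  have "L-lipschitz_on UNIV (\<lambda>y. g (x + y) - g x)"
  proof (rule lipschitz_onI)
    show "dist (g (x + a) - g x) (g (x + b) - g x) \<le> L * dist a b" for a b
      using lip[of "x + a" "x + b"] by (simp add: dist_real_def)
    show "0 \<le> L"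
      using lip[of 1 0] by (auto intro: order_trans[OF abs_ge_zero])
  qed
  then have "continuous_on UNIV (\<lambda>y. g (x + y) - g x)"
    by (rule lipschitz_on_continuous_on)
  then show "(\<lambda>y. g (x + y) - g x) \<in> borel_measurable \<nu>"
    using measurable_cong_sets[OF sets refl] borel_measurable_continuous_onI by blast
  show "AE y in \<nu>. norm (g (x + y) - g x) \<le> norm (L * \<bar>y\<bar>)"
    using lip[of "x + y" x for y] lip[of 1 0] by (auto simp: abs_mult)
qed

lemma nonlocal_op_diff_le:
  fixes \<nu> :: "real measure" and \<phi> :: "real \<Rightarrow> real \<Rightarrow> real" and T :: "real set"
  assumes sets: "sets \<nu> = sets borel" and int: "integrable \<nu> abs"
    and moment: "\<And>\<eta>. 0 \<le> \<eta> \<Longrightarrow> (\<integral> y. min \<bar>y\<bar> \<eta> \<partial>\<nu>) \<le> C * \<eta> powr \<beta>"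
    and lip: "\<And>x x' t. t \<in> T \<Longrightarrow> \<bar>\<phi> x t - \<phi> x' t\<bar> \<le> L * \<bar>x - x'\<bar>"
    and hoel: "\<And>x t t'. t \<in> T \<Longrightarrow> t' \<in> T \<Longrightarrow> \<bar>\<phi> x t - \<phi> x t'\<bar> \<le> L * \<bar>t - t'\<bar> powr (1/2)"
    and t: "t \<in> T" "t' \<in> T"
  shows "\<bar>nonlocal_op \<nu> \<phi> (a, t) - nonlocal_op \<nu> \<phi> (b, t')\<bar>
           \<le> 2 * L * C * (\<bar>a - b\<bar> + \<bar>t - t'\<bar> powr (1/2)) powr \<beta>"
proof -
  define \<eta> where "\<eta> = \<bar>a - b\<bar> + \<bar>t - t'\<bar> powr (1/2)"
  define f where "f x \<tau> y = \<phi> (x + y) \<tau> - \<phi> x \<tau>" for x \<tau> y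
  have L: "0 \<le> L"
    using lip[OF t(1), of 1 0] by (auto intro: order_trans[OF abs_ge_zero])
  have int_f: "integrable \<nu> (f x \<tau>)" if "\<tau> \<in> T" for x \<tau>
    unfolding f_def using lip[OF that] by (rule integrable_lipschitz_increment[OF sets int])
  have jump_le: "\<bar>f a t y - f b t' y\<bar> \<le> 2 * L * min \<bar>y\<bar> \<eta>" for y
  proof -
    have "\<bar>f a t y - f b t' y\<bar> \<le> \<bar>f a t y\<bar> + \<bar>f b t' y\<bar>"
      by linarith
    also have "\<dots> \<le> 2 * L * \<bar>y\<bar>"
      using lip[OF t(1), of "a + y" a] lip[OF t(2), of "b + y" b] by (simp add: f_def)
    finally have small_jump: "\<bar>f a t y - f b t' y\<bar> \<le> 2 * L * \<bar>y\<bar>" .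
    have "\<bar>\<phi> (a + y) t - \<phi> (b + y) t'\<bar> \<le> L * \<eta>" "\<bar>\<phi> a t - \<phi> b t'\<bar> \<le> L * \<eta>"
      using lip[OF t(1), of "a + y" "b + y"] hoel[OF t, of "b + y"]
        lip[OF t(1), of a b] hoel[OF t, of b]
      by (auto simp: \<eta>_def distrib_left abs_le_iff)
    then have "\<bar>f a t y - f b t' y\<bar> \<le> 2 * L * \<eta>"
      by (simp add: f_def)
    with small_jump show ?thesis
      by (simp add: min_def)
  qed
  have int_min: "integrable \<nu> (\<lambda>y. min \<bar>y\<bar> \<eta>)"
    using int by (intro Bochner_Integration.integrable_bound[OF int]) (auto simp: \<eta>_def)
  have "nonlocal_op \<nu> \<phi> (a, t) - nonlocal_op \<nu> \<phi> (b, t') = (\<integral> y. f a t y - f b t' y \<partial>\<nu>)"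
    unfolding nonlocal_op_def f_def[symmetric] using int_f t by simp
  also have "\<bar>\<dots>\<bar> \<le> (\<integral> y. \<bar>f a t y - f b t' y\<bar> \<partial>\<nu>)"
    using integral_norm_bound[of \<nu> "\<lambda>y. f a t y - f b t' y"] by simp
  also have "\<dots> \<le> (\<integral> y. 2 * L * min \<bar>y\<bar> \<eta> \<partial>\<nu>)"
    using int_f t int_min by (intro integral_mono jump_le) auto
  also have "\<dots> \<le> 2 * L * (C * \<eta> powr \<beta>)"
    using moment[of \<eta>] L by (simp add: \<eta>_def mult_left_mono)
  finally show ?thesis
    by (simp add: \<eta>_def mult.assoc)
qed

lemma hoelder_space_if_parabolic_estimate:
  fixes V :: "real \<times> real \<Rightarrow> real" and Q :: "(real \<times> real) set"
  assumes Q: "compact Q" and \<beta>: "0 < \<beta>"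
    and estimate: "\<And>a t b t'. (a, t) \<in> Q \<Longrightarrow> (b, t') \<in> Q \<Longrightarrow>
                     \<bar>V (a, t) - V (b, t')\<bar> \<le> D * (\<bar>a - b\<bar> + \<bar>t - t'\<bar> powr (1/2)) powr \<beta>"
  shows "hoelder_space \<rho>0 \<beta> Q V"
proof -
  have cont: "continuous_on Q V"
    unfolding continuous_on_def
  proof safe
    fix x t assume p: "(x, t) \<in> Q"
    let ?g = "\<lambda>q. D * (\<bar>fst q - x\<bar> + \<bar>snd q - t\<bar> powr (1/2)) powr \<beta>"
    have "((\<lambda>q. V q - V (x, t)) \<longlongrightarrow> 0) (at (x, t) within Q)"
    proof (rule Lim_null_comparison)
      show "\<forall>\<^sub>F q in at (x, t) within Q. norm (V q - V (x, t)) \<le> ?g q"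
        using p by (auto simp: eventually_at_filter intro!: always_eventually estimate)
      have "((\<lambda>q. \<bar>fst q - x\<bar> + \<bar>snd q - t\<bar> powr (1/2)) \<longlongrightarrow> 0) (at (x, t) within Q)"
        by (intro tendsto_add_zero tendsto_zero_powrI tendsto_rabs_zero tendsto_eq_intros) auto
      then show "(?g \<longlongrightarrow> 0) (at (x, t) within Q)"
        using \<beta> by (intro tendsto_mult_right_zero tendsto_zero_powrI) auto
    qed
    then show "(V \<longlongrightarrow> V (x, t)) (at (x, t) within Q)"
      by (simp add: LIM_zero_iff)
  qed
  moreover have "\<exists>B. \<forall>p\<in>Q. \<bar>V p\<bar> \<le> B"
    using compact_imp_bounded[OF compact_continuous_image[OF cont Q]]
    by (auto simp: bounded_iff)
  moreover have "\<bar>V (x, t) - V (x', t)\<bar> \<le> D * \<bar>x - x'\<bar> powr \<beta>"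
    if "(x, t) \<in> Q" "(x', t) \<in> Q" for x x' t
    using estimate[OF that] by simp
  moreover have "\<bar>V (x, t) - V (x, t')\<bar> \<le> D * \<bar>t - t'\<bar> powr (\<beta> / 2)"
    if "(x, t) \<in> Q" "(x, t') \<in> Q" for x t t'
    using estimate[OF that] by (simp add: powr_powr)
  ultimately show ?thesis
    unfolding hoelder_space_def by blast
qed

lemma hoelder_space_nonlocal_op:
  fixes \<rho> :: "real \<Rightarrow> real" and \<nu> :: "real measure" and \<phi> :: "real \<Rightarrow> real \<Rightarrow> real"
    and Q :: "(real \<times> real) set" and T :: "real set" and M \<alpha> \<beta> L \<rho>0 :: real
  assumes \<nu>: "\<nu> = density lborel (\<lambda>y. ennreal (\<rho> y))"
    and \<rho>_meas: "\<rho> \<in> borel_measurable borel" and \<rho>_nonneg: "\<And>y. 0 \<le> \<rho> y"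
    and tail: "(\<integral>\<^sup>+ y. indicator {y. 1 < \<bar>y\<bar>} y * ennreal \<bar>y\<bar> \<partial>\<nu>) < \<infinity>"
    and M: "0 \<le> M" and \<beta>: "0 < \<beta>" "\<beta> < 1" "\<beta> \<le> 1 - \<alpha>"
    and \<rho>_bound: "\<And>y. y \<noteq> 0 \<Longrightarrow> \<bar>y\<bar> \<le> 1 \<Longrightarrow> \<rho> y \<le> M / \<bar>y\<bar> powr (1 + \<alpha>)"
    and lip: "\<And>x x' t. t \<in> T \<Longrightarrow> \<bar>\<phi> x t - \<phi> x' t\<bar> \<le> L * \<bar>x - x'\<bar>"
    and hoel: "\<And>x t t'. t \<in> T \<Longrightarrow> t' \<in> T \<Longrightarrow> \<bar>\<phi> x t - \<phi> x t'\<bar> \<le> L * \<bar>t - t'\<bar> powr (1/2)"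
    and Q: "compact Q" "Q \<subseteq> UNIV \<times> T"
  shows "hoelder_space \<rho>0 \<beta> Q (nonlocal_op \<nu> \<phi>)"
proof -
  have sets: "sets \<nu> = sets borel"
    by (simp add: \<nu>)
  define J where "J = enn2real (\<integral>\<^sup>+ y. indicator {y. 1 < \<bar>y\<bar>} y * ennreal \<bar>y\<bar> \<partial>\<nu>)"
  define C where "C = 2 * M * (1/\<beta> + 1/(1-\<beta>)) + J"
  have C: "0 \<le> C"
    using M \<beta> by (simp add: C_def J_def)
  have small: "(\<integral>\<^sup>+ y. ennreal (min \<bar>y\<bar> \<eta>) \<partial>\<nu>) \<le> ennreal (C * \<eta> powr \<beta>)"
    if \<eta>: "0 < \<eta>" "\<eta> \<le> 1" for \<eta>
  proof -
    have J: "(\<integral>\<^sup>+ y. indicator {y. 1 < \<bar>y\<bar>} y * ennreal \<bar>y\<bar> \<partial>\<nu>) = ennreal J" "0 \<le> J"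
      using tail by (simp_all add: J_def)
    have "(\<integral>\<^sup>+ y. ennreal (min \<bar>y\<bar> \<eta>) \<partial>\<nu>)
        \<le> ennreal (2 * M * (1/\<beta> + 1/(1-\<beta>)) * \<eta> powr \<beta>) + ennreal \<eta> * ennreal J"
      using nn_integral_min_abs_density_le[OF \<nu> \<rho>_meas \<rho>_nonneg M \<beta> \<rho>_bound \<eta>]
      by (simp add: J)
    also have "\<dots> = ennreal (2 * M * (1/\<beta> + 1/(1-\<beta>)) * \<eta> powr \<beta> + \<eta> * J)"
      using M \<beta> \<eta> J(2) by (simp add: ennreal_mult)
    also have "\<dots> \<le> ennreal (C * \<eta> powr \<beta>)"
    proof (rule ennreal_leI)
      have "\<eta> * J \<le> \<eta> powr \<beta> * J"
        using \<eta> \<beta> powr_mono'[of \<beta> 1 \<eta>] J(2) by (intro mult_right_mono) auto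
      then show "2 * M * (1/\<beta> + 1/(1-\<beta>)) * \<eta> powr \<beta> + \<eta> * J \<le> C * \<eta> powr \<beta>"
        by (simp add: C_def algebra_simps)
    qed
    finally show ?thesis .
  qed
  have int: "integrable \<nu> abs"
    using le_less_trans[OF small[of 1]] tail
    by (intro integrable_abs_if_truncated_and_tail_finite[OF sets]) simp_all
  have moment: "(\<integral> y. min \<bar>y\<bar> \<eta> \<partial>\<nu>) \<le> max C (\<integral> y. \<bar>y\<bar> \<partial>\<nu>) * \<eta> powr \<beta>" if "0 \<le> \<eta>" for \<eta>
    using integral_min_abs_le_powr[OF int _ C small that] \<beta> by simp
  show ?thesis
  proof (rule hoelder_space_if_parabolic_estimate[OF Q(1) \<beta>(1)])
    fix a t b t' assume "(a, t) \<in> Q" "(b, t') \<in> Q"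
    then have "t \<in> T" "t' \<in> T"
      using Q(2) by auto
    then show "\<bar>nonlocal_op \<nu> \<phi> (a, t) - nonlocal_op \<nu> \<phi> (b, t')\<bar>
                 \<le> 2 * L * max C (\<integral> y. \<bar>y\<bar> \<partial>\<nu>) * (\<bar>a - b\<bar> + \<bar>t - t'\<bar> powr (1/2)) powr \<beta>"
      using nonlocal_op_diff_le[OF sets int moment lip hoel] by blast
  qed
qed

theorem lemma3p1:
  fixes \<rho> :: "real \<Rightarrow> real" and \<nu> :: "real measure"
    and M \<alpha> l r s L \<rho>0 :: real and \<phi> :: "real \<Rightarrow> real \<Rightarrow> real"
  assumes levy: "levy_measure \<nu>"
    and dens: "\<nu> = density lborel (\<lambda>y. ennreal (\<rho> y))"
    and \<rho>_meas: "\<rho> \<in> borel_measurable borel"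
    and \<rho>_nonneg: "\<And>y. \<rho> y \<ge> 0"
    and big_jumps: "(\<integral>\<^sup>+ y. indicator {y. \<bar>y\<bar> > 1} y * ennreal \<bar>y\<bar> \<partial>\<nu>) < \<infinity>"
    and M_pos: "M > 0" and \<alpha>_range: "0 \<le> \<alpha>" "\<alpha> < 1"
    and \<rho>_bound: "\<And>y. y \<noteq> 0 \<Longrightarrow> \<bar>y\<bar> \<le> 1 \<Longrightarrow> \<rho> y \<le> M / \<bar>y\<bar> powr (1 + \<alpha>)"
    and lr: "l < r" and s_pos: "s > 0"
    and lip: "\<And>x x' t. t \<in> {0..s} \<Longrightarrow> \<bar>\<phi> x t - \<phi> x' t\<bar> \<le> L * \<bar>x - x'\<bar>"
    and hoel: "\<And>x t t'. t \<in> {0..s} \<Longrightarrow> t' \<in> {0..s} \<Longrightarrow>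
                 \<bar>\<phi> x t - \<phi> x t'\<bar> \<le> L * \<bar>t - t'\<bar> powr (1/2)"
    and \<rho>0_pos: "\<rho>0 > 0"
  shows "(\<alpha> = 0 \<longrightarrow> (\<forall>\<gamma>\<in>{0<..<1}. hoelder_space \<rho>0 (1 - \<gamma>)
              (closure ({l<..<r} \<times> {0<..<s})) (nonlocal_op \<nu> \<phi>)))
       \<and> (0 < \<alpha> \<longrightarrow> hoelder_space \<rho>0 (1 - \<alpha>)
              (closure ({l<..<r} \<times> {0<..<s})) (nonlocal_op \<nu> \<phi>))"
proof -
  have closure_eq: "closure ({l<..<r} \<times> {0<..<s}) = {l..r} \<times> {0..s}"
    using lr s_pos by (simp add: closure_Times)
  have "hoelder_space \<rho>0 \<beta> ({l..r} \<times> {0..s}) (nonlocal_op \<nu> \<phi>)"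
    if "0 < \<beta>" "\<beta> < 1" "\<beta> \<le> 1 - \<alpha>" for \<beta>
  proof (rule hoelder_space_nonlocal_op[OF dens \<rho>_meas \<rho>_nonneg big_jumps _ that \<rho>_bound lip hoel])
    show "0 \<le> M"
      using M_pos by simp
    show "compact ({l..r} \<times> {0..s})"
      by (simp add: compact_Times)
    show "{l..r} \<times> {0..s} \<subseteq> UNIV \<times> {0..s}"
      by auto
  qed
  then show ?thesis
    unfolding closure_eq using \<alpha>_range by auto
qed

end
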